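(* Let $\circ$ be one of the binary operations $\cup,\cap,-$ on languages, and for sets of languages $\mathcal{R}_1,\mathcal{R}_2$ over $\Sigma$ define the Cartesian operation $\mathcal{R}_1\otimes\mathcal{R}_2=\{L_1\circ L_2\mid L_1\in\mathcal{R}_1,\ L_2\in\mathcal{R}_2\}$. (1) In general $\mathcal{R}_1\otimes\mathcal{R}_2$ is not a rational set of regular languages: there exist rational sets of regular languages $\mathcal{R}_1,\mathcal{R}_2$ for which it is not. (2) If $\mathcal{R}_1$ and $\mathcal{R}_2$ are finite rational sets of regular languages, then $\mathcal{R}_1\otimes\mathcal{R}_2$ is a rational set of regular languages. (3) In the latter case a new language substitution is in general required: there exist an alphabet $\Delta$, a regular language substitution $\varphi:\Delta\to2^{\Sigma^*}$ and regular $K_1,K_2\subseteq\Delta^+$ with $\mathcal{R}_i=(K_i,\varphi)$ finite such that there is no regular $K'\subseteq\Delta^+$ with $\mathcal{R}_1\otimes\mathcal{R}_2=(K',\varphi)$.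
   Context: Alphabets are nonempty finite sets. A regular language substitution $\varphi:\Delta\to2^{\Sigma^*}$ maps each symbol to a regular language over $\Sigma$, extended by $\varphi(\delta w)=\varphi(\delta)\varphi(w)$. A set $\mathcal{R}$ of regular languages over $\Sigma$ is a rational set of regular languages, written $\mathcal{R}=(K,\varphi)$, if there are an alphabet $\Delta$, a regular $K\subseteq\Delta^+$ and a regular language substitution $\varphi$ with $\mathcal{R}=\{\varphi(w)\mid w\in K\}$. *)

theory Defs
  imports Main
begin

datatype 'a rexp = Zero | One | Atom 'a | Plus "'a rexp" "'a rexp"
  | Times "'a rexp" "'a rexp" | Star "'a rexp"

definition conc :: "'a list set \<Rightarrow> 'a list set \<Rightarrow> 'a list set" where
  "conc A B = {u @ v | u v. u \<in> A \<and> v \<in> B}"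

inductive_set kleene_star :: "'a list set \<Rightarrow> 'a list set" for A where
  star_Nil: "[] \<in> kleene_star A"
| star_app: "u \<in> A \<Longrightarrow> v \<in> kleene_star A \<Longrightarrow> u @ v \<in> kleene_star A"

fun lang :: "'a rexp \<Rightarrow> 'a list set" where
  "lang Zero = {}"
| "lang One = {[]}"
| "lang (Atom a) = {[a]}"
| "lang (Plus r s) = lang r \<union> lang s"
| "lang (Times r s) = conc (lang r) (lang s)"
| "lang (Star r) = kleene_star (lang r)"

definition regular :: "'a list set \<Rightarrow> bool" where
  "regular L \<longleftrightarrow> (\<exists>r. lang r = L)"

definition regular_over :: "'a set \<Rightarrow> 'a list set \<Rightarrow> bool" where
  "regular_over S L \<longleftrightarrow> regular L \<and> L \<subseteq> lists S"

definition alphabet :: "'a set \<Rightarrow> bool" where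
  "alphabet S \<longleftrightarrow> finite S \<and> S \<noteq> {}"

definition plus_words :: "'d set \<Rightarrow> 'd list set" where
  "plus_words D = lists D - {[]}"

definition reg_subst :: "'d set \<Rightarrow> 'a set \<Rightarrow> ('d \<Rightarrow> 'a list set) \<Rightarrow> bool" where
  "reg_subst D S phi \<longleftrightarrow> (\<forall>d\<in>D. regular_over S (phi d))"

fun subst_word :: "('d \<Rightarrow> 'a list set) \<Rightarrow> 'd list \<Rightarrow> 'a list set" where
  "subst_word phi [] = {[]}"
| "subst_word phi (d # w) = conc (phi d) (subst_word phi w)"

text \<open>R = (K, phi): R is the rational set of regular languages given by K and phi.\<close>
definition presents :: "'a set \<Rightarrow> 'd set \<Rightarrow> 'd list set \<Rightarrow> ('d \<Rightarrow> 'a list set)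
    \<Rightarrow> 'a list set set \<Rightarrow> bool" where
  "presents S D K phi R \<longleftrightarrow> alphabet D \<and> reg_subst D S phi \<and>
     K \<subseteq> plus_words D \<and> regular K \<and> R = subst_word phi ` K"

text \<open>Rational set of regular languages over S. The alphabet Delta is taken with
  symbols in nat; every finite alphabet is (up to renaming) such a set.\<close>
definition rational_set :: "'a set \<Rightarrow> 'a list set set \<Rightarrow> bool" where
  "rational_set S R \<longleftrightarrow> (\<exists>(D::nat set) K phi. presents S D K phi R)"

datatype binop = OpUnion | OpInter | OpDiff

fun apply_op :: "binop \<Rightarrow> 'a list set \<Rightarrow> 'a list set \<Rightarrow> 'a list set" where
  "apply_op OpUnion A B = A \<union> B"
| "apply_op OpInter A B = A \<inter> B"
| "apply_op OpDiff A B = A - B"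

definition cart :: "binop \<Rightarrow> 'a list set set \<Rightarrow> 'a list set set \<Rightarrow> 'a list set set" where
  "cart op R1 R2 = {apply_op op L1 L2 | L1 L2. L1 \<in> R1 \<and> L2 \<in> R2}"

end

theory Submission
  imports Defs
begin

text \<open>
  (2) A finite set of regular languages is rational: give each language its own letter.
  So the claim reduces to closure of regular languages under intersection and difference,
  which follows from Brzozowski's characterisation: a language over a finite alphabet is
  regular iff it has finitely many left quotients; the quotients of a language satisfy a
  linear system of language equations, solved by Arden's lemma and elimination.

  (1) If A B = {x, y} with x \<noteq> y, then A or B is a singleton. Hence in a rational set
  (K, phi) every two-element language {x, y} has the form {u p v, u q v} with
  phi(d) = {p, q} for a letter d; so |p| is bounded in terms of (K, phi) alone. The
  Cartesian operation, however, can produce {0^n, 1^n} for every n: unions of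
  {0^n} and {1^m}, or intersections resp. differences of {0,1}^n with 0^* \<union> 1^*
  resp. its complement.

  (3) If phi(d) = {0} for the only letter d, every language (K', phi) is a singleton,
  while {0} \<union> {00}, {0} \<inter> {00} and {0} - {0} are not.
\<close>

lemma append_in_conc: "u \<in> A \<Longrightarrow> v \<in> B \<Longrightarrow> u @ v \<in> conc A B"
  unfolding conc_def by blast

lemma conc_singletons: "conc {u} {v} = {u @ v}"
  unfolding conc_def by blast

lemma conc_empty [simp]: "conc A {} = {}" "conc {} A = {}"
  unfolding conc_def by auto

lemma conc_Nil [simp]: "conc A {[]} = A" "conc {[]} A = A"
  unfolding conc_def by auto

lemma Nil_in_conc [simp]: "[] \<in> conc A B \<longleftrightarrow> [] \<in> A \<and> [] \<in> B"
  unfolding conc_def by auto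

lemma conc_assoc: "conc (conc A B) C = conc A (conc B C)"
  unfolding conc_def by auto (metis, metis append.assoc)

lemma conc_Un_distrib:
  "conc (A \<union> B) C = conc A C \<union> conc B C"
  "conc A (B \<union> C) = conc A B \<union> conc A C"
  unfolding conc_def by auto

lemma conc_UN_distrib: "conc A (\<Union>i\<in>I. B i) = (\<Union>i\<in>I. conc A (B i))"
  unfolding conc_def by auto

lemma conc_lists: "A \<subseteq> lists S \<Longrightarrow> B \<subseteq> lists S \<Longrightarrow> conc A B \<subseteq> lists S"
  unfolding conc_def by fastforce

lemma kleene_star_lists: "A \<subseteq> lists S \<Longrightarrow> kleene_star A \<subseteq> lists S"
proof
  fix x assume "x \<in> kleene_star A" "A \<subseteq> lists S"
  then show "x \<in> lists S"
    by (induction rule: kleene_star.induct) auto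
qed

lemma regular_Un: "regular A \<Longrightarrow> regular B \<Longrightarrow> regular (A \<union> B)"
  unfolding regular_def by (metis lang.simps(4))

lemma regular_conc: "regular A \<Longrightarrow> regular B \<Longrightarrow> regular (conc A B)"
  unfolding regular_def by (metis lang.simps(5))

lemma regular_kleene_star: "regular A \<Longrightarrow> regular (kleene_star A)"
  unfolding regular_def by (metis lang.simps(6))

lemma regular_empty [simp]: "regular {}"
  unfolding regular_def by (metis lang.simps(1))

lemma regular_Nil [simp]: "regular {[]}"
  unfolding regular_def by (metis lang.simps(2))

lemma regular_singleton [simp]: "regular {w}"
proof (induction w)
  case (Cons a w)
  have "regular {[a]}"
    unfolding regular_def by (metis lang.simps(3))
  moreover have "{a # w} = conc {[a]} {w}"
    by (simp add: conc_singletons)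
  ultimately show ?case
    using Cons regular_conc by metis
qed simp

lemma regular_UN: "finite I \<Longrightarrow> (\<And>i. i \<in> I \<Longrightarrow> regular (f i)) \<Longrightarrow> regular (\<Union>i\<in>I. f i)"
  by (induction rule: finite_induct) (auto intro: regular_Un)

lemma regular_finite: "finite W \<Longrightarrow> regular W"
  using regular_UN[of W "\<lambda>w. {w}"] by simp

lemma lists_eq_kleene_star: "lists D = kleene_star ((\<lambda>d. [d]) ` D)"
proof (intro equalityI subsetI)
  fix x assume "x \<in> lists D"
  then show "x \<in> kleene_star ((\<lambda>d. [d]) ` D)"
    by (induction x) (auto intro: kleene_star.intros(1) kleene_star.intros(2)[of "[_]", simplified])
next
  fix x assume "x \<in> kleene_star ((\<lambda>d. [d]) ` D)"
  then show "x \<in> lists D"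
    by (induction rule: kleene_star.induct) auto
qed

lemma regular_lists: "finite D \<Longrightarrow> regular (lists D)"
  unfolding lists_eq_kleene_star by (simp add: regular_kleene_star regular_finite)

lemma plus_words_eq_conc: "plus_words D = conc ((\<lambda>d. [d]) ` D) (lists D)"
proof (intro equalityI subsetI)
  fix x assume "x \<in> plus_words D"
  then obtain d y where "x = [d] @ y" "d \<in> D" "y \<in> lists D"
    unfolding plus_words_def by (cases x) auto
  then show "x \<in> conc ((\<lambda>d. [d]) ` D) (lists D)"
    unfolding conc_def by blast
next
  fix x assume "x \<in> conc ((\<lambda>d. [d]) ` D) (lists D)"
  then show "x \<in> plus_words D"
    unfolding conc_def plus_words_def by auto
qed

lemma regular_plus_words: "finite D \<Longrightarrow> regular (plus_words D)"
  unfolding plus_words_eq_conc by (simp add: regular_conc regular_finite regular_lists)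

lemma lang_subset_lists: "set_rexp r \<subseteq> S \<Longrightarrow> lang r \<subseteq> lists S"
proof (induction r)
  case (Times r1 r2)
  then show ?case by (simp add: conc_lists)
next
  case (Star r)
  then show ?case by (simp add: kleene_star_lists)
qed simp_all

lemma regular_subset_lists_finite:
  assumes "regular L"
  obtains S where "finite S" "L \<subseteq> lists S"
proof -
  from assms obtain r where "L = lang r" unfolding regular_def by blast
  then have "L \<subseteq> lists (set_rexp r)"
    by (simp add: lang_subset_lists)
  with rexp.set_finite show ?thesis
    by (rule that)
qed

section \<open>Linear language equations\<close>

lemma arden:
  assumes "[] \<notin> A" and X: "X = conc A X \<union> B"
  shows "X = conc (kleene_star A) B"
proof
  show "conc (kleene_star A) B \<subseteq> X"
  proof -
    have "u @ b \<in> X" if "u \<in> kleene_star A" "b \<in> B" for u b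
      using that
    proof (induction rule: kleene_star.induct)
      case star_Nil then show ?case using X by auto
    next
      case (star_app u v)
      then have "u @ (v @ b) \<in> conc A X" unfolding conc_def by blast
      then show ?case using X by auto
    qed
    then show ?thesis unfolding conc_def by auto
  qed
next
  show "X \<subseteq> conc (kleene_star A) B"
  proof
    fix x assume "x \<in> X"
    then show "x \<in> conc (kleene_star A) B"
    proof (induction "length x" arbitrary: x rule: less_induct)
      case less
      then consider u x' where "x = u @ x'" "u \<in> A" "x' \<in> X" | "x \<in> B"
        using X unfolding conc_def by blast
      then show ?case
      proof cases
        case 1
        with \<open>[] \<notin> A\<close> have "length x' < length x" by (cases u) auto
        with 1 less.hyps have "x' \<in> conc (kleene_star A) B" by blast
        then obtain s b where sb: "x' = s @ b" "s \<in> kleene_star A" "b \<in> B"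
          unfolding conc_def by blast
        with 1 have "u @ s \<in> kleene_star A" "x = (u @ s) @ b"
          by (simp_all add: kleene_star.star_app)
        with sb show ?thesis
          unfolding conc_def by blast
      next
        case 2
        then show ?thesis
          unfolding conc_def using kleene_star.star_Nil by fastforce
      qed
    qed
  qed
qed

lemma regular_solution_linear_system:
  "finite V \<Longrightarrow> (\<forall>v\<in>V. X v = E v \<union> (\<Union>u\<in>V. conc (C v u) (X u))) \<Longrightarrow>
   (\<forall>v\<in>V. regular (E v)) \<Longrightarrow> (\<forall>v\<in>V. \<forall>u\<in>V. regular (C v u) \<and> [] \<notin> C v u) \<Longrightarrow>
   \<forall>v\<in>V. regular (X v)"
proof (induction V arbitrary: E C rule: finite_induct)
  case empty then show ?case by simp
next
  case (insert t V)
  define S where "S = kleene_star (C t t)"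
  define E' where "E' v = E v \<union> conc (C v t) (conc S (E t))" for v
  define C' where "C' v u = C v u \<union> conc (C v t) (conc S (C t u))" for v u
  have split_t: "X v = E v \<union> conc (C v t) (X t) \<union> (\<Union>u\<in>V. conc (C v u) (X u))"
    if "v \<in> insert t V" for v
  proof -
    have "X v = E v \<union> (\<Union>u\<in>insert t V. conc (C v u) (X u))"
      using insert.prems(1) that by blast
    then show ?thesis
      unfolding UN_insert by blast
  qed
  have Xt: "X t = conc S (E t \<union> (\<Union>u\<in>V. conc (C t u) (X u)))"
    unfolding S_def
  proof (rule arden)
    show "[] \<notin> C t t" using insert.prems(3) by blast
    show "X t = conc (C t t) (X t) \<union> (E t \<union> (\<Union>u\<in>V. conc (C t u) (X u)))"
      using split_t[of t] by blast
  qed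
  \<comment> \<open>Gaussian elimination: substitute this solution for X t into the other equations\<close>
  have eqV: "\<forall>v\<in>V. X v = E' v \<union> (\<Union>u\<in>V. conc (C' v u) (X u))"
  proof
    fix v assume "v \<in> V"
    have "conc (C v t) (X t) = conc (C v t) (conc S (E t)) \<union>
        (\<Union>u\<in>V. conc (conc (C v t) (conc S (C t u))) (X u))"
      unfolding Xt conc_Un_distrib conc_UN_distrib by (simp add: conc_assoc)
    then show "X v = E' v \<union> (\<Union>u\<in>V. conc (C' v u) (X u))"
      using split_t[of v] \<open>v \<in> V\<close> unfolding E'_def C'_def conc_Un_distrib by auto
  qed
  have "regular S"
    unfolding S_def using insert.prems(3) by (simp add: regular_kleene_star)
  have regV: "\<forall>v\<in>V. regular (X v)"
  proof (rule insert.IH[OF eqV])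
    show "\<forall>v\<in>V. regular (E' v)"
      unfolding E'_def using insert.prems(2,3) \<open>regular S\<close> by (auto intro!: regular_Un regular_conc)
    show "\<forall>v\<in>V. \<forall>u\<in>V. regular (C' v u) \<and> [] \<notin> C' v u"
      unfolding C'_def using insert.prems(3) \<open>regular S\<close> by (auto intro!: regular_Un regular_conc)
  qed
  have "regular (X t)"
    unfolding Xt using \<open>regular S\<close> insert.prems(2,3) regV insert.hyps(1)
    by (intro regular_conc regular_Un regular_UN) auto
  with regV show ?case by blast
qed

section \<open>Left quotients\<close>

definition Derivs :: "'a list \<Rightarrow> 'a list set \<Rightarrow> 'a list set" where
  "Derivs w L = {v. w @ v \<in> L}"

definition quotients :: "'a list set \<Rightarrow> 'a list set set" where
  "quotients L = range (\<lambda>w. Derivs w L)"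

lemma Derivs_Nil [simp]: "Derivs [] L = L"
  unfolding Derivs_def by simp

lemma Derivs_Derivs [simp]: "Derivs v (Derivs w L) = Derivs (w @ v) L"
  unfolding Derivs_def by simp

lemma self_in_quotients: "L \<in> quotients L"
  unfolding quotients_def by (metis Derivs_Nil rangeI)

lemma Derivs_in_quotients: "X \<in> quotients L \<Longrightarrow> Derivs w X \<in> quotients L"
  unfolding quotients_def by auto

lemma quotient_equation:
  assumes "L \<subseteq> lists S" and "X \<in> quotients L"
  shows "X = (if [] \<in> X then {[]} else {}) \<union>
    (\<Union>Y\<in>quotients L. conc {[a] | a. a \<in> S \<and> Derivs [a] X = Y} Y)"
    (is "X = ?E \<union> (\<Union>Y\<in>quotients L. conc (?C Y) Y)")
proof (intro equalityI subsetI)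
  fix z assume z: "z \<in> X"
  show "z \<in> ?E \<union> (\<Union>Y\<in>quotients L. conc (?C Y) Y)"
  proof (cases z)
    case Nil then show ?thesis using z by simp
  next
    case (Cons a z')
    have "X \<subseteq> lists S"
      using assms unfolding quotients_def Derivs_def by auto
    with z Cons have "[a] \<in> ?C (Derivs [a] X)"
      by auto
    moreover have "z' \<in> Derivs [a] X"
      using z Cons unfolding Derivs_def by simp
    ultimately have "[a] @ z' \<in> conc (?C (Derivs [a] X)) (Derivs [a] X)"
      by (rule append_in_conc)
    with assms(2) Cons show ?thesis
      by (auto intro: Derivs_in_quotients)
  qed
next
  fix z assume "z \<in> ?E \<union> (\<Union>Y\<in>quotients L. conc (?C Y) Y)"
  then consider "z \<in> ?E" | Y where "z \<in> conc (?C Y) Y"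
    by auto
  then show "z \<in> X"
  proof cases
    case 1
    then show ?thesis by (simp split: if_splits)
  next
    case 2
    then obtain a z' where "z = [a] @ z'" "z' \<in> Derivs [a] X"
      unfolding conc_def by blast
    then show ?thesis by (simp add: Derivs_def)
  qed
qed

lemma regular_if_finite_quotients:
  assumes "finite S" and "L \<subseteq> lists S" and "finite (quotients L)"
  shows "regular L"
proof -
  define E :: "'a list set \<Rightarrow> 'a list set" where "E X = (if [] \<in> X then {[]} else {})" for X
  define C :: "'a list set \<Rightarrow> 'a list set \<Rightarrow> 'a list set"
    where "C X Y = {[a] | a. a \<in> S \<and> Derivs [a] X = Y}" for X Y
  have system: "\<forall>X\<in>quotients L. id X = E X \<union> (\<Union>Y\<in>quotients L. conc (C X Y) (id Y))"
    unfolding E_def C_def id_def using quotient_equation[OF assms(2)] by blast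
  have "\<forall>X\<in>quotients L. regular (E X)"
    unfolding E_def by simp
  moreover have "finite (C X Y)" for X Y
    using assms(1) by (rule finite_subset[rotated, OF finite_imageI[of S "\<lambda>a. [a]"]]) (auto simp: C_def)
  then have "\<forall>X\<in>quotients L. \<forall>Y\<in>quotients L. regular (C X Y) \<and> [] \<notin> C X Y"
    unfolding C_def by (blast intro: regular_finite)
  ultimately have "\<forall>X\<in>quotients L. regular (id X)"
    by (rule regular_solution_linear_system[OF assms(3) system])
  then show ?thesis
    using self_in_quotients by auto
qed

lemma finite_quotients_finite:
  assumes "finite W"
  shows "finite (quotients W)"
proof -
  define suffixes where "suffixes = (\<Union>x\<in>W. (\<lambda>n. drop n x) ` {..length x})"
  have "z \<in> suffixes" if "w @ z \<in> W" for w z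
    unfolding suffixes_def using that by (intro UN_I[of "w @ z"] image_eqI[of _ _ "length w"]) auto
  then have "quotients W \<subseteq> Pow suffixes"
    unfolding quotients_def Derivs_def by auto
  moreover have "finite suffixes"
    unfolding suffixes_def using assms by simp
  ultimately show ?thesis
    by (simp add: finite_subset)
qed

lemma finite_quotients_binop:
  assumes "\<And>w. Derivs w (f A B) = f (Derivs w A) (Derivs w B)"
    and "finite (quotients A)" and "finite (quotients B)"
  shows "finite (quotients (f A B))"
proof -
  have "quotients (f A B) \<subseteq> (\<lambda>(X, Y). f X Y) ` (quotients A \<times> quotients B)"
    unfolding quotients_def assms(1) by auto
  then show ?thesis
    using assms(2,3) by (simp add: finite_subset)
qed

lemma Derivs_conc:
  "Derivs w (conc A B) = conc (Derivs w A) B \<union> (\<Union>v\<in>{v. \<exists>u\<in>A. w = u @ v}. Derivs v B)"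
  unfolding Derivs_def conc_def by (auto simp: append_eq_append_conv2)

lemma finite_quotients_conc:
  assumes "finite (quotients A)" and "finite (quotients B)"
  shows "finite (quotients (conc A B))"
proof -
  have "quotients (conc A B) \<subseteq> (\<lambda>(X, T). conc X B \<union> \<Union>T) ` (quotients A \<times> Pow (quotients B))"
  proof
    fix Y assume "Y \<in> quotients (conc A B)"
    then obtain w where Y: "Y = Derivs w (conc A B)"
      unfolding quotients_def by auto
    let ?T = "(\<lambda>v. Derivs v B) ` {v. \<exists>u\<in>A. w = u @ v}"
    have "Y = (\<lambda>(X, T). conc X B \<union> \<Union>T) (Derivs w A, ?T)"
      unfolding Y Derivs_conc by simp
    moreover have "(Derivs w A, ?T) \<in> quotients A \<times> Pow (quotients B)"
      unfolding quotients_def by auto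
    ultimately show "Y \<in> (\<lambda>(X, T). conc X B \<union> \<Union>T) ` (quotients A \<times> Pow (quotients B))"
      by blast
  qed
  then show ?thesis
    using assms by (simp add: finite_subset)
qed

lemma quotients_subset_if_Derivs_closed:
  assumes "L \<in> Q" and "\<And>a X. X \<in> Q \<Longrightarrow> Derivs [a] X \<in> Q"
  shows "quotients L \<subseteq> Q"
proof -
  have "Derivs w L \<in> Q" for w
    by (induction w rule: rev_induct) (simp_all add: assms flip: Derivs_Derivs)
  then show ?thesis
    unfolding quotients_def by auto
qed

lemma Derivs_Cons_conc:
  "Derivs [a] (conc A B) = conc (Derivs [a] A) B \<union> (if [] \<in> A then Derivs [a] B else {})"
  unfolding Derivs_def conc_def by (auto simp: Cons_eq_append_conv)

lemma Derivs_Cons_kleene_star: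
  "Derivs [a] (kleene_star A) = conc (Derivs [a] A) (kleene_star A)"
proof (intro equalityI subsetI)
  fix w assume "w \<in> Derivs [a] (kleene_star A)"
  then have "a # w \<in> kleene_star A"
    unfolding Derivs_def by simp
  then show "w \<in> conc (Derivs [a] A) (kleene_star A)"
  proof (induction "a # w" arbitrary: w rule: kleene_star.induct)
    case (star_app u v)
    then show ?case
      unfolding Derivs_def conc_def by (cases u) auto
  qed
next
  fix w assume "w \<in> conc (Derivs [a] A) (kleene_star A)"
  then obtain u v where "w = u @ v" "a # u \<in> A" "v \<in> kleene_star A"
    unfolding Derivs_def conc_def by auto
  then show "w \<in> Derivs [a] (kleene_star A)"
    unfolding Derivs_def using kleene_star.star_app by fastforce
qed

lemma finite_quotients_kleene_star:
  assumes "finite (quotients A)"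
  shows "finite (quotients (kleene_star A))"
proof -
  let ?S = "kleene_star A"
  define Q where "Q = insert ?S ((\<lambda>T. \<Union>X\<in>T. conc X ?S) ` Pow (quotients A))"
  have "Derivs [a] Z \<in> Q" if "Z \<in> Q" for a Z
  proof -
    have DA: "Derivs [a] A \<in> quotients A"
      by (rule Derivs_in_quotients[OF self_in_quotients])
    consider "Z = ?S" | T where "T \<subseteq> quotients A" "Z = (\<Union>X\<in>T. conc X ?S)"
      using \<open>Z \<in> Q\<close> unfolding Q_def by auto
    then show ?thesis
    proof cases
      case 1
      then have "Derivs [a] Z = (\<Union>X\<in>{Derivs [a] A}. conc X ?S)"
        by (simp add: Derivs_Cons_kleene_star)
      then show ?thesis
        unfolding Q_def using DA by blast
    next
      case 2
      define T' where "T' = Derivs [a] ` T \<union> (if \<exists>X\<in>T. [] \<in> X then {Derivs [a] A} else {})"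
      have "Derivs [a] Z = (\<Union>X\<in>T. Derivs [a] (conc X ?S))"
        unfolding 2 Derivs_def by auto
      also have "\<dots> = (\<Union>X\<in>T. conc (Derivs [a] X) ?S \<union>
          (if [] \<in> X then conc (Derivs [a] A) ?S else {}))"
        by (simp add: Derivs_Cons_conc Derivs_Cons_kleene_star cong: if_cong)
      also have "\<dots> = (\<Union>X\<in>T'. conc X ?S)"
        unfolding T'_def by (auto split: if_splits)
      finally have "Derivs [a] Z = (\<Union>X\<in>T'. conc X ?S)" .
      moreover have "T' \<subseteq> quotients A"
        unfolding T'_def using 2 DA by (auto intro: Derivs_in_quotients)
      ultimately show ?thesis
        unfolding Q_def by blast
    qed
  qed
  then have "quotients ?S \<subseteq> Q"
    by (intro quotients_subset_if_Derivs_closed) (simp_all add: Q_def)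
  moreover have "finite Q"
    unfolding Q_def using assms by simp
  ultimately show ?thesis
    by (rule finite_subset)
qed

lemma finite_quotients_lang: "finite (quotients (lang r))"
proof (induction r)
  case (Plus r s)
  have "finite (quotients (lang r \<union> lang s))"
    by (rule finite_quotients_binop) (auto simp: Derivs_def Plus.IH)
  then show ?case by simp
qed (simp_all add: finite_quotients_finite finite_quotients_conc finite_quotients_kleene_star)

lemma Derivs_apply_op: "Derivs w (apply_op op A B) = apply_op op (Derivs w A) (Derivs w B)"
  by (cases op) (auto simp: Derivs_def)

lemma regular_apply_op:
  assumes "regular A" and "regular B"
  shows "regular (apply_op op A B)"
proof -
  obtain SA SB where "finite SA" "A \<subseteq> lists SA" "finite SB" "B \<subseteq> lists SB"
    using assms regular_subset_lists_finite by metis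
  then have "finite (SA \<union> SB)" "apply_op op A B \<subseteq> lists (SA \<union> SB)"
    by (cases op; auto)+
  moreover have "finite (quotients (apply_op op A B))"
    using assms finite_quotients_lang unfolding regular_def
    by (intro finite_quotients_binop[where f = "apply_op op", OF Derivs_apply_op]) auto
  ultimately show ?thesis
    by (rule regular_if_finite_quotients)
qed

lemma regular_over_apply_op:
  "regular_over S A \<Longrightarrow> regular_over S B \<Longrightarrow> regular_over S (apply_op op A B)"
  unfolding regular_over_def using regular_apply_op[of A B op] by (cases op) auto

lemma regular_over_subst_word:
  "w \<in> lists D \<Longrightarrow> reg_subst D S phi \<Longrightarrow> regular_over S (subst_word phi w)"
  by (induction w) (auto simp: reg_subst_def regular_over_def regular_conc conc_lists)

lemma presents_regular_over:
  assumes "presents S D K phi R" and "L \<in> R"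
  shows "regular_over S L"
proof -
  from assms obtain w where "w \<in> K" "L = subst_word phi w"
    unfolding presents_def by blast
  with assms(1) show ?thesis
    unfolding presents_def plus_words_def by (auto intro: regular_over_subst_word)
qed

lemma presents_finite:
  "alphabet D \<Longrightarrow> reg_subst D S phi \<Longrightarrow> finite K \<Longrightarrow> K \<subseteq> plus_words D \<Longrightarrow>
   presents S D K phi (subst_word phi ` K)"
  unfolding presents_def by (simp add: regular_finite)

lemma rational_set_finite:
  assumes "finite R" and "\<forall>L\<in>R. regular_over S L"
  shows "rational_set S R"
proof -
  obtain Ls where Ls: "set Ls = R"
    using finite_list[OF assms(1)] by blast
  \<comment> \<open>the surplus letter length Ls keeps the alphabet nonempty when R is empty\<close>
  define phi where "phi i = (if i < length Ls then Ls ! i else {})" for i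
  define K where "K = (\<lambda>i. [i]) ` {..<length Ls}"
  have "presents S {..length Ls} K phi R"
    unfolding presents_def
  proof (intro conjI)
    show "alphabet {..length Ls}"
      unfolding alphabet_def by auto
    have "Ls ! i \<in> R" if "i < length Ls" for i
      using Ls that by auto
    then show "reg_subst {..length Ls} S phi"
      unfolding reg_subst_def phi_def using assms(2) by (simp add: regular_over_def)
    show "K \<subseteq> plus_words {..length Ls}" "regular K"
      unfolding K_def plus_words_def by (auto intro: regular_finite)
    have "subst_word phi ` K = (\<lambda>i. Ls ! i) ` {..<length Ls}"
      unfolding K_def image_image by (simp add: phi_def)
    then show "R = subst_word phi ` K"
      using Ls by (auto simp: set_conv_nth)
  qed
  then show ?thesis
    unfolding rational_set_def by blast
qed

lemma cart_image: "cart op R1 R2 = (\<lambda>(A, B). apply_op op A B) ` (R1 \<times> R2)"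
  unfolding cart_def by auto

lemma cart_memI: "L1 \<in> R1 \<Longrightarrow> L2 \<in> R2 \<Longrightarrow> L = apply_op op L1 L2 \<Longrightarrow> L \<in> cart op R1 R2"
  unfolding cart_def by blast

lemma rational_set_cart_finite:
  assumes "rational_set S R1" and "rational_set S R2" and "finite R1" and "finite R2"
  shows "rational_set S (cart op R1 R2)"
proof (rule rational_set_finite)
  show "finite (cart op R1 R2)"
    unfolding cart_image using assms(3,4) by simp
  have "\<forall>L\<in>R1. regular_over S L" "\<forall>L\<in>R2. regular_over S L"
    using assms(1,2) presents_regular_over unfolding rational_set_def by blast+
  then show "\<forall>L\<in>cart op R1 R2. regular_over S L"
    unfolding cart_image by (auto intro: regular_over_apply_op)
qed

section \<open>Two-element languages in rational sets\<close>

lemma obtain_two_by_length: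
  assumes "A \<noteq> {}" and "\<forall>a. A \<noteq> {a}"
  obtains a1 a2 where "a1 \<in> A" "a2 \<in> A" "a1 \<noteq> a2" "length a1 \<le> length a2"
proof -
  obtain a1 where "a1 \<in> A"
    using assms(1) by blast
  moreover obtain a2 where "a2 \<in> A" "a2 \<noteq> a1"
    using assms(2) \<open>a1 \<in> A\<close> by blast
  ultimately show ?thesis
    using that by (cases "length a1 \<le> length a2") auto
qed

lemma conc_eq_doubleton_singleton_factor:
  assumes "conc A B = {x, y}"
  shows "(\<exists>a. A = {a}) \<or> (\<exists>b. B = {b})"
proof (rule ccontr)
  assume "\<not> ?thesis"
  then have "\<forall>a. A \<noteq> {a}" "\<forall>b. B \<noteq> {b}"
    by simp_all
  moreover have "A \<noteq> {}" "B \<noteq> {}"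
    using assms by (metis conc_empty(2) insert_not_empty, metis conc_empty(1) insert_not_empty)
  ultimately obtain a1 a2 b1 b2 where
    a: "a1 \<in> A" "a2 \<in> A" "a1 \<noteq> a2" "length a1 \<le> length a2" and
    b: "b1 \<in> B" "b2 \<in> B" "b1 \<noteq> b2" "length b1 \<le> length b2"
    by (metis obtain_two_by_length)
  \<comment> \<open>a1 @ b1, a1 @ b2, a2 @ b2 would be three distinct elements of {x, y}\<close>
  have "a1 @ b1 \<noteq> a2 @ b2"
  proof
    assume eq: "a1 @ b1 = a2 @ b2"
    then have "length a1 + length b1 = length a2 + length b2"
      by (metis length_append)
    then have "length a1 = length a2"
      using a(4) b(4) by linarith
    with eq a(3) show False
      by simp
  qed
  moreover have "a1 @ b1 \<noteq> a1 @ b2" "a1 @ b2 \<noteq> a2 @ b2"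
    using a(3) b(3) by simp_all
  moreover have "a1 @ b1 \<in> {x, y}" "a1 @ b2 \<in> {x, y}" "a2 @ b2 \<in> {x, y}"
    using a b assms append_in_conc by blast+
  ultimately show False
    by auto
qed

lemma conc_singleton_eq_doubleton:
  assumes "conc {a} B = {x, y}"
  obtains x' y' where "B = {x', y'}" "x = a @ x'" "y = a @ y'"
proof -
  have "x \<in> conc {a} B" "y \<in> conc {a} B"
    using assms by simp_all
  then obtain x' y' where "x' \<in> B" "x = a @ x'" "y' \<in> B" "y = a @ y'"
    unfolding conc_def by blast
  moreover have "b \<in> {x', y'}" if "b \<in> B" for b
  proof -
    have "a @ b \<in> {x, y}"
      using assms that append_in_conc by blast
    with \<open>x = a @ x'\<close> \<open>y = a @ y'\<close> show ?thesis
      by auto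
  qed
  ultimately show ?thesis
    using that by blast
qed

lemma conc_eq_doubleton_singleton:
  assumes "conc A {b} = {x, y}"
  obtains x' y' where "A = {x', y'}" "x = x' @ b" "y = y' @ b"
proof -
  have "x \<in> conc A {b}" "y \<in> conc A {b}"
    using assms by simp_all
  then obtain x' y' where "x' \<in> A" "x = x' @ b" "y' \<in> A" "y = y' @ b"
    unfolding conc_def by blast
  moreover have "a \<in> {x', y'}" if "a \<in> A" for a
  proof -
    have "a @ b \<in> {x, y}"
      using assms that append_in_conc by blast
    with \<open>x = x' @ b\<close> \<open>y = y' @ b\<close> show ?thesis
      by auto
  qed
  ultimately show ?thesis
    using that by blast
qed

lemma subst_word_eq_doubleton:
  assumes "subst_word phi w = {x, y}" and "x \<noteq> y"
  shows "\<exists>d\<in>set w. \<exists>u p q v. phi d = {p, q} \<and> x = u @ p @ v \<and> y = u @ q @ v"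
  using assms
proof (induction w arbitrary: x y)
  case Nil
  then show ?case by auto
next
  case (Cons d w)
  have eq: "conc (phi d) (subst_word phi w) = {x, y}"
    using Cons.prems(1) by simp
  from conc_eq_doubleton_singleton_factor[OF this] show ?case
  proof (elim disjE exE)
    fix a assume "phi d = {a}"
    from eq[unfolded this] obtain x' y'
      where w: "subst_word phi w = {x', y'}" and xy: "x = a @ x'" "y = a @ y'"
      by (rule conc_singleton_eq_doubleton)
    have "x' \<noteq> y'"
      using Cons.prems(2) unfolding xy by simp
    then obtain d' u p q v where
      "d' \<in> set w" "phi d' = {p, q}" "x' = u @ p @ v" "y' = u @ q @ v"
      using Cons.IH[OF w] by blast
    with xy show ?case
      by (intro bexI[of _ d'] exI[of _ "a @ u"] exI[of _ p] exI[of _ q] exI[of _ v]) simp_all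
  next
    fix b assume "subst_word phi w = {b}"
    from eq[unfolded this] obtain x' y' where "phi d = {x', y'}" "x = x' @ b" "y = y' @ b"
      by (rule conc_eq_doubleton_singleton)
    then show ?case
      by (intro bexI[of _ d] exI[of _ "[]"] exI[of _ x'] exI[of _ y'] exI[of _ b]) simp_all
  qed
qed

lemma presents_doubleton_factor_bound:
  assumes "presents S D K phi R"
  obtains M where "\<And>x y. {x, y} \<in> R \<Longrightarrow> x \<noteq> y \<Longrightarrow>
    \<exists>u p q v. x = u @ p @ v \<and> y = u @ q @ v \<and> length p \<le> M"
proof -
  define P where "P = (\<Union>d\<in>{d\<in>D. finite (phi d)}. phi d)"
  have "finite P"
    unfolding P_def using assms by (simp add: presents_def alphabet_def)
  have "\<exists>u p q v. x = u @ p @ v \<and> y = u @ q @ v \<and> length p \<le> Max (length ` P)"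
    if xy: "{x, y} \<in> R" "x \<noteq> y" for x y
  proof -
    have "{x, y} \<in> subst_word phi ` K"
      using assms xy(1) unfolding presents_def by simp
    then obtain w where w: "{x, y} = subst_word phi w" "w \<in> K"
      by (rule imageE)
    moreover have "set w \<subseteq> D"
      using assms w(2) unfolding presents_def plus_words_def by auto
    ultimately obtain d u p q v where
      "d \<in> D" "phi d = {p, q}" "x = u @ p @ v" "y = u @ q @ v"
      using subst_word_eq_doubleton[OF w(1)[symmetric] xy(2)] by blast
    moreover have "p \<in> P"
      unfolding P_def using calculation by auto
    then have "length p \<le> Max (length ` P)"
      using \<open>finite P\<close> by simp
    ultimately show ?thesis
      by blast
  qed
  then show ?thesis
    by (rule that)
qed

lemma not_presents_if_replicate_doubletons:
  assumes "a \<noteq> b" and "\<And>n. n \<ge> 1 \<Longrightarrow> {replicate n a, replicate n b} \<in> R"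
  shows "\<not> presents S D K phi R"
proof
  assume presents: "presents S D K phi R"
  obtain M where M: "\<And>x y. {x, y} \<in> R \<Longrightarrow> x \<noteq> y \<Longrightarrow>
      \<exists>u p q v. x = u @ p @ v \<and> y = u @ q @ v \<and> length p \<le> M"
    by (rule presents_doubleton_factor_bound[OF presents]) blast
  have "{replicate (Suc M) a, replicate (Suc M) b} \<in> R"
    by (rule assms(2)) simp
  moreover have "replicate (Suc M) a \<noteq> replicate (Suc M) b"
    using assms(1) by simp
  ultimately obtain u p q v where
    a: "replicate (Suc M) a = u @ p @ v" and b: "replicate (Suc M) b = u @ q @ v"
    and "length p \<le> M"
    using M by blast
  have "set u \<subseteq> {a} \<inter> {b}" "set v \<subseteq> {a} \<inter> {b}"
    using arg_cong[OF a, of set] arg_cong[OF b, of set] by auto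
  then have "u = []" "v = []"
    using assms(1) by auto
  with a have "length p = Suc M"
    by (metis append_Nil append_Nil2 length_replicate)
  with \<open>length p \<le> M\<close> show False
    by simp
qed

lemma subst_word_letters:
  "subst_word (\<lambda>_. (\<lambda>c. [c]) ` C) w = {x \<in> lists C. length x = length w}"
proof (induction w)
  case (Cons d w)
  have "conc ((\<lambda>c. [c]) ` C) {x \<in> lists C. length x = n} = {x \<in> lists C. length x = Suc n}" for n
  proof (intro equalityI subsetI)
    fix x assume "x \<in> {x \<in> lists C. length x = Suc n}"
    then obtain c y where "x = [c] @ y" "[c] \<in> (\<lambda>c. [c]) ` C" "y \<in> {x \<in> lists C. length x = n}"
      by (cases x) auto
    then show "x \<in> conc ((\<lambda>c. [c]) ` C) {x \<in> lists C. length x = n}"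
      using append_in_conc by metis
  qed (auto simp: conc_def)
  with Cons show ?case
    by simp
qed auto

lemma lists_singleton_of_length: "{x \<in> lists {c}. length x = n} = {replicate n c}"
  by (auto intro: replicate_length_same[symmetric])

lemma subst_word_singleton_letter: "subst_word (\<lambda>_. {[c]}) w = {replicate (length w) c}"
  using subst_word_letters[of "{c}" w] by (simp add: lists_singleton_of_length)

lemma lists_two_letters_of_length_Int:
  "{x \<in> lists {a, b}. length x = n} \<inter> (lists {a} \<union> lists {b}) = {replicate n a, replicate n b}"
  using lists_singleton_of_length[of a n] lists_singleton_of_length[of b n] by auto

text \<open>The family {L^n | n \<ge> 1}, presented over the one-letter alphabet {0}.\<close>

definition powers :: "'a list set \<Rightarrow> 'a list set set" where
  "powers L = subst_word (\<lambda>_. L) ` plus_words {0::nat}"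

lemma rational_set_powers: "regular_over S L \<Longrightarrow> rational_set S (powers L)"
  unfolding rational_set_def powers_def presents_def
  by (intro exI[of _ "{0}"] exI[of _ "plus_words {0}"] exI[of _ "\<lambda>_. L"])
    (simp add: alphabet_def reg_subst_def regular_plus_words)

lemma subst_word_replicate_in_powers:
  "n \<ge> 1 \<Longrightarrow> subst_word (\<lambda>_. L) (replicate n (0::nat)) \<in> powers L"
  unfolding powers_def plus_words_def by (rule imageI) auto

lemma cart_OpUnion_powers:
  assumes "n \<ge> 1"
  shows "{replicate n a, replicate n b} \<in> cart OpUnion (powers {[a]}) (powers {[b]})"
  using subst_word_replicate_in_powers[OF assms] subst_word_replicate_in_powers[OF assms]
  by (rule cart_memI) (simp add: subst_word_singleton_letter insert_commute)

lemma words_of_length_in_powers: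
  "n \<ge> 1 \<Longrightarrow> {x \<in> lists C. length x = n} \<in> powers ((\<lambda>c. [c]) ` C)"
  using subst_word_replicate_in_powers[of n "(\<lambda>c. [c]) ` C"]
  unfolding subst_word_letters length_replicate .

lemma cart_OpInter_powers:
  assumes "n \<ge> 1"
  shows "{replicate n a, replicate n b} \<in>
    cart OpInter (powers ((\<lambda>c. [c]) ` {a, b})) {lists {a} \<union> lists {b}}"
  using words_of_length_in_powers[OF assms] singletonI
  by (rule cart_memI) (simp add: lists_two_letters_of_length_Int)

lemma cart_OpDiff_powers:
  assumes "n \<ge> 1"
  shows "{replicate n a, replicate n b} \<in>
    cart OpDiff (powers ((\<lambda>c. [c]) ` {a, b})) {lists {a, b} - (lists {a} \<union> lists {b})}"
  using words_of_length_in_powers[OF assms] singletonI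
proof (rule cart_memI)
  show "{replicate n a, replicate n b} = apply_op OpDiff {x \<in> lists {a, b}. length x = n}
      (lists {a, b} - (lists {a} \<union> lists {b}))"
    using lists_two_letters_of_length_Int[of a b n] by auto
qed

lemma cart_not_rational_set:
  "\<exists>(S::nat set) R1 R2. alphabet S \<and> rational_set S R1 \<and> rational_set S R2 \<and>
     \<not> rational_set S (cart op R1 R2)"
proof -
  let ?letters = "(\<lambda>c. [c]) ` {0, 1::nat}"
  let ?one_letter = "lists {0::nat} \<union> lists {1}"
  let ?mixed = "lists {0::nat, 1} - ?one_letter"
  have "regular ?one_letter" "regular (lists {0, 1::nat})"
    by (simp_all add: regular_Un regular_lists)
  then have "regular ?mixed"
    using regular_apply_op[of "lists {0::nat, 1}" ?one_letter OpDiff] by simp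
  then have rational_one_letter: "rational_set {0, 1} {?one_letter}"
    and rational_mixed: "rational_set {0, 1} {?mixed}"
    using \<open>regular ?one_letter\<close> lists_mono[of "{0::nat}" "{0, 1}"] lists_mono[of "{1::nat}" "{0, 1}"]
    by (simp_all add: rational_set_finite regular_over_def)
  have "regular_over {0, 1} {[0::nat]}" "regular_over {0, 1} {[1::nat]}"
    "regular_over {0, 1} ?letters"
    by (simp_all add: regular_over_def regular_finite)
  then have rational_powers: "rational_set {0, 1} (powers {[0::nat]})"
    "rational_set {0, 1} (powers {[1::nat]})" "rational_set {0, 1} (powers ?letters)"
    by (simp_all add: rational_set_powers)
  obtain R1 R2 where "rational_set {0, 1::nat} R1" "rational_set {0, 1} R2"
    and doubletons: "\<And>n. n \<ge> 1 \<Longrightarrow> {replicate n 0, replicate n 1} \<in> cart op R1 R2"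
  proof (cases op)
    case OpUnion
    then have "{replicate n 0, replicate n 1} \<in> cart op (powers {[0]}) (powers {[1]})"
      if "n \<ge> 1" for n
      using cart_OpUnion_powers[OF that] by simp
    with rational_powers(1,2) show thesis
      by (rule that)
  next
    case OpInter
    then have "{replicate n 0, replicate n 1} \<in> cart op (powers ?letters) {?one_letter}"
      if "n \<ge> 1" for n
      using cart_OpInter_powers[OF that] by simp
    with rational_powers(3) rational_one_letter show thesis
      by (rule that)
  next
    case OpDiff
    then have "{replicate n 0, replicate n 1} \<in> cart op (powers ?letters) {?mixed}"
      if "n \<ge> 1" for n
      using cart_OpDiff_powers[OF that] by simp
    with rational_powers(3) rational_mixed show thesis
      by (rule that)
  qed
  moreover have "\<not> presents {0, 1} D K phi (cart op R1 R2)" for D :: "nat set" and K phi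
    by (rule not_presents_if_replicate_doubletons[OF _ doubletons]) simp
  moreover have "alphabet {0, 1::nat}"
    unfolding alphabet_def by simp
  ultimately show ?thesis
    unfolding rational_set_def by blast
qed

lemma cart_requires_new_substitution:
  "\<exists>(S::nat set) (D::nat set) phi K1 K2.
     alphabet S \<and> presents S D K1 phi (subst_word phi ` K1) \<and>
     presents S D K2 phi (subst_word phi ` K2) \<and>
     finite (subst_word phi ` K1) \<and> finite (subst_word phi ` K2) \<and>
     \<not> (\<exists>K'. presents S D K' phi (cart op (subst_word phi ` K1) (subst_word phi ` K2)))"
proof -
  \<comment> \<open>every language of the form (K', phi) is a singleton, but L1 op L2 is not\<close>
  define phi :: "nat \<Rightarrow> nat list set" where "phi = (\<lambda>_. {[0]})"
  define K1 :: "nat list set" where "K1 = {[0]}"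
  define K2 :: "nat list set" where "K2 = (if op = OpDiff then {[0]} else {[0, 0]})"
  have "alphabet {0 :: nat}" "reg_subst {0 :: nat} {0 :: nat} phi"
    unfolding alphabet_def reg_subst_def regular_over_def phi_def by simp_all
  then have "presents {0} {0} K1 phi (subst_word phi ` K1)"
    "presents {0} {0} K2 phi (subst_word phi ` K2)"
    by (rule presents_finite; simp add: K1_def K2_def plus_words_def)+
  moreover have "finite (subst_word phi ` K1)" "finite (subst_word phi ` K2)"
    unfolding K1_def K2_def by simp_all
  moreover define L where "L = apply_op op {[0 :: nat]} (if op = OpDiff then {[0]} else {[0, 0]})"
  have "L \<in> cart op (subst_word phi ` K1) (subst_word phi ` K2)"
    unfolding K1_def K2_def L_def phi_def by (rule cart_memI) (simp_all add: conc_singletons)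
  moreover have "L \<notin> subst_word phi ` K'" for K'
  proof
    assume "L \<in> subst_word phi ` K'"
    then obtain w :: "nat list" where "L = {replicate (length w) 0}"
      unfolding phi_def subst_word_singleton_letter by blast
    then show False
      unfolding L_def by (cases op) auto
  qed
  ultimately show ?thesis
    using \<open>alphabet {0}\<close> unfolding presents_def by metis
qed

theorem corollary2:
  fixes op :: binop
  shows
    "(\<exists>(S::nat set) R1 R2. alphabet S \<and> rational_set S R1 \<and> rational_set S R2 \<and>
        \<not> rational_set S (cart op R1 R2))
   \<and> (\<forall>(S::'a set) R1 R2. alphabet S \<longrightarrow> rational_set S R1 \<longrightarrow> rational_set S R2 \<longrightarrow>
        finite R1 \<longrightarrow> finite R2 \<longrightarrow> rational_set S (cart op R1 R2))
   \<and> (\<exists>(S::nat set) (D::nat set) phi K1 K2.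
        alphabet S \<and> presents S D K1 phi (subst_word phi ` K1) \<and>
        presents S D K2 phi (subst_word phi ` K2) \<and>
        finite (subst_word phi ` K1) \<and> finite (subst_word phi ` K2) \<and>
        \<not> (\<exists>K'. presents S D K' phi (cart op (subst_word phi ` K1) (subst_word phi ` K2))))"
  using cart_not_rational_set[of op] rational_set_cart_finite[of _ _ _ op]
    cart_requires_new_substitution[of op]
  by blast

end
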